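(* Let $G$ be a finite group, $\alpha \in \mathbb{Z}_{\geq 0}$, and let $K(G,\alpha)$ be the near-group fusion ring. All irreducible NIM-reps $(A,M)$ over $K(G,\alpha)$ whose basis $M$ consists of exactly two $G$-orbits, $M=\{m^1_k\}_{1\leq k\leq |G:H_1|}\cup\{m^2_k\}_{1\leq k\leq |G:H_2|}$ with the orbits governed by subgroups $H_1,H_2\subseteq G$, are parametrised by tuples $(H_1,H_2,c_{1,1},c_{2,2})$, where $H_1,H_2\subseteq G$ are subgroups and $c_{1,1},c_{2,2}\in \mathbb{Z}_{\geq0}$, satisfying the conditions \begin{itemize} \item $\alpha = c_{1,1}|G:H_1| + c_{2,2}|G:H_2|$, \item $|G|$ divides $|H_1||H_2|$, and \item $\frac{|H_1||H_2|}{|G|}+ c_{1,1}c_{2,2}$ is a square number. \end{itemize} For such a tuple, the action of the non-invertible element $X$ is given by \begin{align*} X \vartriangleright m^1_i &= c_{1,1}\sum_{k=1}^{|G:H_1|}m^1_k + \sqrt{\tfrac{|H_1||H_2|}{|G|} + c_{1,1}c_{2,2}}\sum_{k=1}^{|G:H_2|}m^2_k,\\ X \vartriangleright m^2_i &= \sqrt{\tfrac{|H_1||H_2|}{|G|} + c_{1,1}c_{2,2}}\sum_{k=1}^{|G:H_1|}m^1_k + c_{2,2}\sum_{k=1}^{|G:H_2|}m^2_k, \end{align*} i.e. $c_{1,2}=c_{2,1}=\sqrt{\frac{|H_1||H_2|}{|G|} + c_{1,1}c_{2,2}}$.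
   Context: The near-group fusion ring $K(G,\alpha)$ is the integer span of $G\cup\{X\}$, with group elements multiplying by the group operation, $Xg=gX=X$ for $g\in G$, $X^2=\sum_{g\in G} g+\alpha X$, and $X^*=X$. A NIM-rep is a $\mathbb{Z}_+$-module $(A,M)$ over the fusion ring with symmetric bilinear form $(m_l,m_k)=\delta_{l,k}$ satisfying $(b\vartriangleright m_l,m_k)=(m_l,b^*\vartriangleright m_k)$. The group elements act on the basis $M$ by a $G$-action, partitioning $M$ into $G$-orbits, each isomorphic to a left coset set $G/H_i$ for a subgroup $H_i$. For orbit labels $i,j$, $c_{i,j}:=(X\vartriangleright m^i_l,m^j_k)$, which is independent of $l,k$ and symmetric in $i,j$, so that $X\vartriangleright m^i_l=\sum_j c_{i,j}\sum_k m^j_k$. *)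

theory Defs
  imports "HOL-Algebra.Algebra"
begin

text \<open>A NIM-rep over the near-group fusion ring K(G,alpha) with (finite, orthonormal) basis M.
  The group elements act by the G-action phi on M (a permutation action, hence automatically
  compatible with the form since g* = g^-1). The action of X is encoded by its matrix
  N m m' = (X |> m, m'), a non-negative integer.  The axioms are:
  X* = X (symmetry), X g = X, g X = X and X^2 = sum_g g + alpha X.\<close>

definition near_group_nimrep ::
  "('a, 'b) monoid_scheme \<Rightarrow> nat \<Rightarrow> 'm set \<Rightarrow> ('a \<Rightarrow> 'm \<Rightarrow> 'm) \<Rightarrow> ('m \<Rightarrow> 'm \<Rightarrow> nat) \<Rightarrow> bool"
  where "near_group_nimrep G \<alpha> M \<phi> N \<longleftrightarrow>
     finite M \<and> group_action G M \<phi> \<and>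
     (\<forall>m\<in>M. \<forall>m'\<in>M. N m m' = N m' m) \<and>
     (\<forall>g\<in>carrier G. \<forall>m\<in>M. \<forall>m'\<in>M. N (\<phi> g m) m' = N m m') \<and>
     (\<forall>g\<in>carrier G. \<forall>m\<in>M. \<forall>m'\<in>M. N m (\<phi> (inv\<^bsub>G\<^esub> g) m') = N m m') \<and>
     (\<forall>m\<in>M. \<forall>m''\<in>M.
        (\<Sum>m'\<in>M. N m m' * N m' m'') = card {g \<in> carrier G. \<phi> g m = m''} + \<alpha> * N m m'')"

definition nimrep_irreducible ::
  "('a, 'b) monoid_scheme \<Rightarrow> 'm set \<Rightarrow> ('a \<Rightarrow> 'm \<Rightarrow> 'm) \<Rightarrow> ('m \<Rightarrow> 'm \<Rightarrow> nat) \<Rightarrow> bool"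
  where "nimrep_irreducible G M \<phi> N \<longleftrightarrow> M \<noteq> {} \<and>
     (\<forall>S. S \<subseteq> M \<and> S \<noteq> {} \<and> (\<forall>g\<in>carrier G. \<forall>m\<in>S. \<phi> g m \<in> S) \<and>
          (\<forall>m\<in>S. \<forall>m'\<in>M. N m m' \<noteq> 0 \<longrightarrow> m' \<in> S) \<longrightarrow> S = M)"

definition two_orbit_conditions ::
  "('a, 'b) monoid_scheme \<Rightarrow> nat \<Rightarrow> 'a set \<Rightarrow> 'a set \<Rightarrow> nat \<Rightarrow> nat \<Rightarrow> bool"
  where "two_orbit_conditions G \<alpha> H1 H2 c11 c22 \<longleftrightarrow>
     \<alpha> = c11 * (order G div card H1) + c22 * (order G div card H2) \<and>
     order G dvd card H1 * card H2 \<and>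
     (\<exists>s::nat. s\<^sup>2 = card H1 * card H2 div order G + c11 * c22)"

definition two_orbit_X_action ::
  "('a, 'b) monoid_scheme \<Rightarrow> ('a \<Rightarrow> 'm \<Rightarrow> 'm) \<Rightarrow> ('m \<Rightarrow> 'm \<Rightarrow> nat) \<Rightarrow> 'm \<Rightarrow> 'm \<Rightarrow> nat \<Rightarrow> nat \<Rightarrow> bool"
  where "two_orbit_X_action G \<phi> N m1 m2 c11 c22 \<longleftrightarrow>
     (let O1 = orbit G \<phi> m1; O2 = orbit G \<phi> m2;
          c12 = N m1 m2 in
      c12\<^sup>2 = card (stabilizer G \<phi> m1) * card (stabilizer G \<phi> m2) div order G + c11 * c22 \<and>
      (\<forall>m\<in>O1. \<forall>m'\<in>O1. N m m' = c11) \<and>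
      (\<forall>m\<in>O2. \<forall>m'\<in>O2. N m m' = c22) \<and>
      (\<forall>m\<in>O1. \<forall>m'\<in>O2. N m m' = c12 \<and> N m' m = c12))"

end

theory Submission
  imports Defs
begin

(* Since X g = g X = X, the matrix N m m' = (X m, m') is invariant under G in both arguments,
   hence constant on pairs of orbits: it is the block matrix of c11, c12, c22.  Writing
   n_i = |G:H_i| and h_i = |H_i|, the number of g with g m = m' is h_i inside the i-th orbit
   and 0 across, so X^2 = sum_g g + alpha X evaluated at the orbit representatives reads
     n1 c11^2 + n2 c12^2 = h1 + alpha c11,
     n1 c11 c12 + n2 c12 c22 = alpha c12,
     n1 c12^2 + n2 c22^2 = h2 + alpha c22.
   Irreducibility says exactly c12 <> 0.  Then the middle equation is
   alpha = n1 c11 + n2 c22, and the outer ones become n2 (c12^2 - c11 c22) = h1 and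
   n1 (c12^2 - c11 c22) = h2, i.e. h1 h2 = |G| (c12^2 - c11 c22).  Conversely, for
   subgroups satisfying these conditions the block matrix with c12 = sqrt(h1 h2/|G| + c11 c22)
   is an irreducible NIM-rep on the G-set of right cosets of H1 and of H2. *)

lemma group_actionI:
  fixes G (structure)
  assumes "group G"
    and extensional: "\<And>g. g \<in> carrier G \<Longrightarrow> \<phi> g \<in> extensional E"
    and closed: "\<And>g x. g \<in> carrier G \<Longrightarrow> x \<in> E \<Longrightarrow> \<phi> g x \<in> E"
    and mult: "\<And>g h x. g \<in> carrier G \<Longrightarrow> h \<in> carrier G \<Longrightarrow> x \<in> E \<Longrightarrow> \<phi> (g \<otimes> h) x = \<phi> g (\<phi> h x)"
    and one: "\<And>x. x \<in> E \<Longrightarrow> \<phi> \<one> x = x"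
  shows "group_action G E \<phi>"
proof -
  interpret group G by fact
  have Bij: "\<phi> g \<in> Bij E" if g: "g \<in> carrier G" for g
  proof -
    have "bij_betw (\<phi> g) E E"
    proof (rule bij_betwI)
      show "\<phi> g \<in> E \<rightarrow> E" "\<phi> (inv g) \<in> E \<rightarrow> E"
        using closed g by auto
      show "\<phi> (inv g) (\<phi> g x) = x" if "x \<in> E" for x
        using mult[of "inv g" g x] one g that by simp
      show "\<phi> g (\<phi> (inv g) x) = x" if "x \<in> E" for x
        using mult[of g "inv g" x] one g that by simp
    qed
    then show ?thesis
      using extensional g by (simp add: Bij_def)
  qed
  have "\<phi> (g \<otimes> h) = compose E (\<phi> g) (\<phi> h)" if "g \<in> carrier G" "h \<in> carrier G" for g h
    using that by (intro extensionalityI[OF extensional compose_extensional]) (auto simp: mult compose_eq)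
  then have "\<phi> \<in> hom G (BijGroup E)"
    using Bij by (auto intro!: homI simp: BijGroup_def)
  then show ?thesis
    by (simp add: group_action_def group_hom_def group_hom_axioms_def group_BijGroup)
qed

context group_action
begin

lemma orbit_subset: "x \<in> E \<Longrightarrow> orbit G \<phi> x \<subseteq> E"
  using element_image by (auto simp: orbit_def)

lemma act_in_orbit: "g \<in> carrier G \<Longrightarrow> \<phi> g x \<in> orbit G \<phi> x"
  by (auto simp: orbit_def)

lemma orbit_eq:
  assumes "x \<in> E" "y \<in> orbit G \<phi> x"
  shows "orbit G \<phi> y = orbit G \<phi> x"
proof -
  have "y \<in> E" "x \<in> orbit G \<phi> y"
    using assms orbit_subset orbit_sym by blast+
  with assms show ?thesis
    using orbit_trans orbit_subset by (meson subsetD subsetI subset_antisym)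
qed

lemma act_in_orbit_iff:
  assumes "g \<in> carrier G" "a \<in> E" "x \<in> E"
  shows "\<phi> g x \<in> orbit G \<phi> a \<longleftrightarrow> x \<in> orbit G \<phi> a"
proof
  assume "\<phi> g x \<in> orbit G \<phi> a"
  moreover have "x \<in> orbit G \<phi> (\<phi> g x)"
    using assms orbit_sym act_in_orbit element_image by blast
  ultimately show "x \<in> orbit G \<phi> a"
    using assms(2) orbit_eq by blast
qed (use assms act_in_orbit orbit_eq in blast)

lemma finite_orbit: "finite (carrier G) \<Longrightarrow> finite (orbit G \<phi> x)"
  unfolding orbit_def by (simp add: setcompr_eq_image)

lemma card_transporter:
  assumes "x \<in> E" "y \<in> orbit G \<phi> x"
  shows "card {g \<in> carrier G. \<phi> g x = y} = card (stabilizer G \<phi> x)"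
proof -
  interpret group G
    using group_hom group_hom.axioms(1) by blast
  obtain k where k: "k \<in> carrier G" "\<phi> k x = y"
    using assms(2) by (auto simp: orbit_def)
  have "{g \<in> carrier G. \<phi> g x = y} = (\<otimes>) k ` stabilizer G \<phi> x"
  proof (intro equalityI subsetI)
    fix g assume g: "g \<in> {g \<in> carrier G. \<phi> g x = y}"
    then have "inv k \<otimes> g \<in> stabilizer G \<phi> x"
      using k assms(1) composition_rule orbit_sym_aux by (auto simp: stabilizer_def)
    moreover have "g = k \<otimes> (inv k \<otimes> g)"
      using g k by (simp add: m_assoc[symmetric])
    ultimately show "g \<in> (\<otimes>) k ` stabilizer G \<phi> x"
      by blast
  qed (use k assms(1) composition_rule in \<open>auto simp: stabilizer_def\<close>)
  moreover have "inj_on ((\<otimes>) k) (stabilizer G \<phi> x)"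
    by (rule inj_onI) (metis k(1) l_cancel stabilizer_subset subsetD)
  ultimately show ?thesis
    by (simp add: card_image)
qed

lemma card_stabilizer_orbit_eq:
  assumes "finite (carrier G)" "x \<in> E" "y \<in> orbit G \<phi> x"
  shows "card (stabilizer G \<phi> y) = card (stabilizer G \<phi> x)"
proof -
  have "y \<in> E"
    using assms orbit_subset by blast
  then have "card (orbit G \<phi> x) * card (stabilizer G \<phi> y) = card (orbit G \<phi> x) * card (stabilizer G \<phi> x)"
    using orbit_stabilizer_theorem assms orbit_eq by metis
  moreover have "card (orbit G \<phi> x) \<noteq> 0"
    using assms finite_orbit orbit_refl by (metis card_0_eq empty_iff)
  ultimately show ?thesis
    by simp
qed

lemma order_div_card_stabilizer:
  assumes "finite (carrier G)" "x \<in> E"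
  shows "order G div card (stabilizer G \<phi> x) = card (orbit G \<phi> x)"
proof -
  have "card (stabilizer G \<phi> x) \<noteq> 0"
    using assms stabilizer_one_closed stabilizer_subset by (metis card_0_eq empty_iff finite_subset)
  then show ?thesis
    using orbit_stabilizer_theorem[OF assms(2)] by (metis nonzero_mult_div_cancel_right)
qed

lemma invariant_matrix_orbit_const:
  assumes "\<forall>g\<in>carrier G. \<forall>m\<in>E. \<forall>m'\<in>E. N (\<phi> g m) m' = N m m'"
    and "\<forall>g\<in>carrier G. \<forall>m\<in>E. \<forall>m'\<in>E. N m (\<phi> (inv g) m') = N m m'"
    and "a \<in> E" "b \<in> E" "x \<in> orbit G \<phi> a" "y \<in> orbit G \<phi> b"
  shows "N x y = N a b"
proof -
  interpret group G
    using group_hom group_hom.axioms(1) by blast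
  obtain g k where g: "g \<in> carrier G" "x = \<phi> g a" and k: "k \<in> carrier G" "y = \<phi> k b"
    using assms(5,6) by (auto simp: orbit_def)
  have "N x y = N a (\<phi> (inv (inv k)) b)"
    using assms(1) g k assms(3,4) element_image by simp
  also have "\<dots> = N a b"
    using assms(2) k assms(3,4) by blast
  finally show ?thesis .
qed

lemma orbits_eq_pair:
  assumes "card (orbits G E \<phi>) = 2" "x \<in> E" "y \<in> E" "orbit G \<phi> x \<noteq> orbit G \<phi> y"
  shows "orbits G E \<phi> = {orbit G \<phi> x, orbit G \<phi> y}"
proof -
  have "{orbit G \<phi> x, orbit G \<phi> y} \<subseteq> orbits G E \<phi>"
    using assms(2,3) by (auto simp: orbits_def)
  moreover have "finite (orbits G E \<phi>)"
    using assms(1) card.infinite by fastforce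
  moreover have "card {orbit G \<phi> x, orbit G \<phi> y} = card (orbits G E \<phi>)"
    using assms(1,4) by simp
  ultimately show ?thesis
    by (metis card_subset_eq)
qed

end

lemma near_group_block_equations_iff:
  fixes n1 n2 h1 h2 g \<alpha> c11 c12 c22 :: nat
  assumes orbit_stabilizer: "n1 * h1 = g" "n2 * h2 = g" and "0 < g" and "c12 \<noteq> 0"
  shows "(n1 * (c11 * c11) + n2 * (c12 * c12) = h1 + \<alpha> * c11 \<and>
          n1 * (c11 * c12) + n2 * (c12 * c22) = \<alpha> * c12 \<and>
          n1 * (c12 * c12) + n2 * (c22 * c22) = h2 + \<alpha> * c22) \<longleftrightarrow>
         (\<alpha> = c11 * n1 + c22 * n2 \<and> g dvd h1 * h2 \<and> c12\<^sup>2 = h1 * h2 div g + c11 * c22)"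
    (is "?equations \<longleftrightarrow> ?conditions")
proof
  assume eqs: ?equations
  have "c12 * (c11 * n1 + c22 * n2) = c12 * \<alpha>"
    using eqs by (simp add: algebra_simps)
  then have \<alpha>: "\<alpha> = c11 * n1 + c22 * n2"
    using \<open>c12 \<noteq> 0\<close> by simp
  then have h1_eq: "n2 * (c12 * c12) = h1 + n2 * (c11 * c22)"
    using eqs by (simp add: algebra_simps)
  have "0 < n2"
    using orbit_stabilizer(2) \<open>0 < g\<close> by auto
  then have le: "c11 * c22 \<le> c12 * c12"
    using h1_eq by (metis le_add2 mult_le_cancel1)
  define d where "d = c12 * c12 - c11 * c22"
  have "h1 * h2 = g * d"
    using h1_eq le orbit_stabilizer(2) unfolding d_def
    by (metis add_diff_cancel_right' diff_mult_distrib2 mult.assoc mult.commute)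
  then show ?conditions
    using \<alpha> le \<open>0 < g\<close> unfolding d_def by (simp add: power2_eq_square)
next
  assume ?conditions
  then obtain q where \<alpha>: "\<alpha> = c11 * n1 + c22 * n2" and q: "h1 * h2 = g * q"
    and sq: "c12 * c12 = q + c11 * c22"
    using \<open>0 < g\<close> by (auto simp: power2_eq_square )
  have "h2 * (n2 * q) = h2 * h1" "h1 * (n1 * q) = h1 * h2"
    using q orbit_stabilizer by (simp_all add: algebra_simps)
  moreover have "0 < h1" "0 < h2"
    using orbit_stabilizer \<open>0 < g\<close> by (metis nat_0_less_mult_iff)+
  ultimately have "n2 * q = h1" "n1 * q = h2"
    by simp_all
  then show ?equations
    using \<alpha> sq by (simp add: algebra_simps)
qed

definition block_matrix :: "'m set \<Rightarrow> nat \<Rightarrow> nat \<Rightarrow> nat \<Rightarrow> 'm \<Rightarrow> 'm \<Rightarrow> nat"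
  where "block_matrix S c11 c12 c22 x y =
    (if x \<in> S then (if y \<in> S then c11 else c12) else (if y \<in> S then c12 else c22))"

locale two_orbit_action = group_action +
  fixes m1 m2
  assumes finite_carrier: "finite (carrier G)"
    and m1_in: "m1 \<in> E" and m2_in: "m2 \<in> E"
    and E_eq: "E = orbit G \<phi> m1 \<union> orbit G \<phi> m2"
    and orbits_disjoint: "orbit G \<phi> m1 \<inter> orbit G \<phi> m2 = {}"
begin

abbreviation "O1 \<equiv> orbit G \<phi> m1"
abbreviation "O2 \<equiv> orbit G \<phi> m2"

lemma m1_in_O1: "m1 \<in> O1" and m2_in_O2: "m2 \<in> O2" and m2_notin_O1: "m2 \<notin> O1"
  using orbit_refl m1_in m2_in orbits_disjoint by auto

lemma order_pos: "0 < order G"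
  using finite_carrier stabilizer_one_closed[OF m1_in] stabilizer_subset
  by (auto simp: order_def card_gt_0_iff)

lemma orbits_subset_E: "x \<in> O1 \<Longrightarrow> x \<in> E" "x \<in> O2 \<Longrightarrow> x \<in> E"
  using E_eq by auto

lemma in_O2_iff: "x \<in> E \<Longrightarrow> x \<in> O2 \<longleftrightarrow> x \<notin> O1"
  using E_eq orbits_disjoint by blast

lemma act_in_O1_iff: "g \<in> carrier G \<Longrightarrow> x \<in> E \<Longrightarrow> \<phi> g x \<in> O1 \<longleftrightarrow> x \<in> O1"
  using act_in_orbit_iff m1_in by blast

lemma card_orbits: "card (orbits G E \<phi>) = 2"
proof -
  have "orbit G \<phi> x \<in> {O1, O2}" if "x \<in> E" for x
    using that E_eq m1_in m2_in orbit_eq by blast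
  then have "orbits G E \<phi> = {O1, O2}"
    using m1_in m2_in unfolding orbits_def by blast
  moreover have "O1 \<noteq> O2"
    using m2_in_O2 m2_notin_O1 by blast
  ultimately show ?thesis
    by simp
qed

lemma sum_orbitwise_const:
  assumes "\<And>x. x \<in> O1 \<Longrightarrow> f x = f m1" "\<And>x. x \<in> O2 \<Longrightarrow> f x = f m2"
  shows "(\<Sum>x\<in>E. f x) = card O1 * f m1 + card O2 * f m2"
proof -
  have "(\<Sum>x\<in>E. f x) = (\<Sum>x\<in>O1. f x) + (\<Sum>x\<in>O2. f x)"
    using E_eq orbits_disjoint finite_orbit finite_carrier by (simp add: sum.union_disjoint)
  then show ?thesis
    using assms by simp
qed

lemma card_transporter_block:
  assumes "x \<in> E" "y \<in> E"
  shows "card {g \<in> carrier G. \<phi> g x = y} =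
    block_matrix O1 (card (stabilizer G \<phi> m1)) 0 (card (stabilizer G \<phi> m2)) x y"
proof (cases "(x \<in> O1) = (y \<in> O1)")
  case True
  then obtain m where m: "m \<in> E" "x \<in> orbit G \<phi> m" "y \<in> orbit G \<phi> m"
    and stab: "card (stabilizer G \<phi> m) = block_matrix O1 (card (stabilizer G \<phi> m1)) 0 (card (stabilizer G \<phi> m2)) x y"
    using assms m1_in m2_in in_O2_iff unfolding block_matrix_def by (cases "x \<in> O1") auto
  then have "y \<in> orbit G \<phi> x"
    using orbit_eq by blast
  then show ?thesis
    using card_transporter card_stabilizer_orbit_eq finite_carrier m stab assms(1) by metis
next
  case False
  then have "{g \<in> carrier G. \<phi> g x = y} = {}"
    using act_in_O1_iff assms(1) by blast
  moreover have "block_matrix O1 (card (stabilizer G \<phi> m1)) 0 (card (stabilizer G \<phi> m2)) x y = 0"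
    using False by (auto simp: block_matrix_def)
  ultimately show ?thesis
    by (metis card.empty)
qed

lemma block_matrix_of_nimrep:
  assumes "near_group_nimrep G \<alpha> E \<phi> N" "x \<in> E" "y \<in> E"
  shows "N x y = block_matrix O1 (N m1 m1) (N m1 m2) (N m2 m2) x y"
proof -
  have left: "\<forall>g\<in>carrier G. \<forall>m\<in>E. \<forall>m'\<in>E. N (\<phi> g m) m' = N m m'"
    and right: "\<forall>g\<in>carrier G. \<forall>m\<in>E. \<forall>m'\<in>E. N m (\<phi> (inv g) m') = N m m'"
    and symmetric: "N m2 m1 = N m1 m2"
    using assms(1) m1_in m2_in unfolding near_group_nimrep_def by blast+
  note const = invariant_matrix_orbit_const[OF left right]
  show ?thesis
    using symmetric const[OF m1_in m1_in] const[OF m1_in m2_in] const[OF m2_in m1_in] const[OF m2_in m2_in]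
      assms(2,3) in_O2_iff unfolding block_matrix_def by auto
qed

context
  fixes N c11 c12 c22
  assumes N_block: "\<And>x y. x \<in> E \<Longrightarrow> y \<in> E \<Longrightarrow> N x y = block_matrix O1 c11 c12 c22 x y"
begin

lemma near_group_nimrep_block_iff_equations:
  "near_group_nimrep G \<alpha> E \<phi> N \<longleftrightarrow>
     card O1 * (c11 * c11) + card O2 * (c12 * c12) = card (stabilizer G \<phi> m1) + \<alpha> * c11 \<and>
     card O1 * (c11 * c12) + card O2 * (c12 * c22) = \<alpha> * c12 \<and>
     card O1 * (c12 * c12) + card O2 * (c22 * c22) = card (stabilizer G \<phi> m2) + \<alpha> * c22"
    (is "_ \<longleftrightarrow> ?equations")
proof -
  interpret group G
    using group_hom group_hom.axioms(1) by blast
  let ?B = "block_matrix O1 c11 c12 c22"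
  let ?T = "block_matrix O1 (card (stabilizer G \<phi> m1)) 0 (card (stabilizer G \<phi> m2))"
  let ?block_equation = "\<lambda>x z.
    card O1 * (?B x m1 * ?B m1 z) + card O2 * (?B x m2 * ?B m2 z) = ?T x z + \<alpha> * ?B x z"
  have square_iff: "(\<Sum>y\<in>E. N x y * N y z) = card {g \<in> carrier G. \<phi> g x = z} + \<alpha> * N x z
      \<longleftrightarrow> ?block_equation x z"
    if "x \<in> E" "z \<in> E" for x z
  proof -
    have "(\<Sum>y\<in>E. N x y * N y z) = card O1 * (?B x m1 * ?B m1 z) + card O2 * (?B x m2 * ?B m2 z)"
      using that m1_in m2_in m1_in_O1 m2_notin_O1 in_O2_iff orbits_subset_E
      by (subst sum_orbitwise_const) (auto simp: N_block block_matrix_def)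
    then show ?thesis
      using that card_transporter_block N_block by simp
  qed
  have "finite E"
    using E_eq finite_orbit finite_carrier by simp
  moreover have "\<forall>x\<in>E. \<forall>y\<in>E. N x y = N y x"
    by (simp add: N_block block_matrix_def)
  moreover have "\<forall>g\<in>carrier G. \<forall>x\<in>E. \<forall>y\<in>E. N (\<phi> g x) y = N x y"
    and "\<forall>g\<in>carrier G. \<forall>x\<in>E. \<forall>y\<in>E. N x (\<phi> (inv g) y) = N x y"
    using act_in_O1_iff element_image[OF _ _ refl] by (simp_all add: N_block block_matrix_def)
  ultimately have "near_group_nimrep G \<alpha> E \<phi> N \<longleftrightarrow> (\<forall>x\<in>E. \<forall>z\<in>E. ?block_equation x z)"
    unfolding near_group_nimrep_def using group_action_axioms square_iff by blast
  also have "\<dots> \<longleftrightarrow> ?equations"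
  proof
    assume "\<forall>x\<in>E. \<forall>z\<in>E. ?block_equation x z"
    then have "?block_equation m1 m1" "?block_equation m1 m2" "?block_equation m2 m2"
      using m1_in m2_in by blast+
    then show ?equations
      using m1_in_O1 m2_notin_O1 by (simp add: block_matrix_def)
  next
    assume ?equations
    then show "\<forall>x\<in>E. \<forall>z\<in>E. ?block_equation x z"
      using m1_in_O1 m2_notin_O1 by (simp add: block_matrix_def algebra_simps)
  qed
  finally show ?thesis .
qed

lemma near_group_nimrep_block_iff:
  assumes "c12 \<noteq> 0"
  shows "near_group_nimrep G \<alpha> E \<phi> N \<longleftrightarrow>
    \<alpha> = c11 * (order G div card (stabilizer G \<phi> m1)) + c22 * (order G div card (stabilizer G \<phi> m2)) \<and>
    order G dvd card (stabilizer G \<phi> m1) * card (stabilizer G \<phi> m2) \<and>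
    c12\<^sup>2 = card (stabilizer G \<phi> m1) * card (stabilizer G \<phi> m2) div order G + c11 * c22"
  unfolding near_group_nimrep_block_iff_equations
    order_div_card_stabilizer[OF finite_carrier m1_in] order_div_card_stabilizer[OF finite_carrier m2_in]
  by (rule near_group_block_equations_iff[OF orbit_stabilizer_theorem[OF m1_in]
        orbit_stabilizer_theorem[OF m2_in] _ assms])
    (rule order_pos)

lemma nimrep_irreducible_block_iff: "nimrep_irreducible G E \<phi> N \<longleftrightarrow> c12 \<noteq> 0"
proof
  assume irreducible: "nimrep_irreducible G E \<phi> N"
  show "c12 \<noteq> 0"
  proof
    assume "c12 = 0"
    then have "\<forall>m\<in>O1. \<forall>m'\<in>E. N m m' \<noteq> 0 \<longrightarrow> m' \<in> O1"
      using orbits_subset_E by (auto simp: N_block block_matrix_def)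
    moreover have "\<forall>g\<in>carrier G. \<forall>m\<in>O1. \<phi> g m \<in> O1"
      using act_in_O1_iff orbits_subset_E by blast
    moreover have "O1 \<subseteq> E" "O1 \<noteq> {}"
      using orbits_subset_E m1_in_O1 by blast+
    ultimately have "O1 = E"
      using irreducible unfolding nimrep_irreducible_def by (elim conjE allE[of _ O1]) simp
    then show False
      using m2_in m2_notin_O1 by blast
  qed
next
  assume "c12 \<noteq> 0"
  then have across: "y \<in> S" if "x \<in> S" "S \<subseteq> E" "y \<in> E" "(x \<in> O1) \<noteq> (y \<in> O1)"
      and "\<forall>m\<in>S. \<forall>m'\<in>E. N m m' \<noteq> 0 \<longrightarrow> m' \<in> S" for S x y
    using that by (auto simp: N_block block_matrix_def)
  show "nimrep_irreducible G E \<phi> N"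
    unfolding nimrep_irreducible_def
  proof (intro conjI allI impI)
    show "E \<noteq> {}"
      using m1_in by blast
    fix S
    assume S: "S \<subseteq> E \<and> S \<noteq> {} \<and> (\<forall>g\<in>carrier G. \<forall>m\<in>S. \<phi> g m \<in> S) \<and>
      (\<forall>m\<in>S. \<forall>m'\<in>E. N m m' \<noteq> 0 \<longrightarrow> m' \<in> S)"
    then obtain x where "x \<in> S"
      by blast
    moreover obtain w where "w \<in> E" "(x \<in> O1) \<noteq> (w \<in> O1)"
      using m1_in m2_in m1_in_O1 m2_notin_O1 by blast
    ultimately have "w \<in> S"
      using across S by blast
    have "y \<in> S" if "y \<in> E" for y
      using across[OF \<open>x \<in> S\<close>] across[OF \<open>w \<in> S\<close>] \<open>(x \<in> O1) \<noteq> (w \<in> O1)\<close> S that by blast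
    then show "S = E"
      using S by blast
  qed
qed

lemma two_orbit_X_actionI:
  assumes "c12\<^sup>2 = card (stabilizer G \<phi> m1) * card (stabilizer G \<phi> m2) div order G + c11 * c22"
  shows "two_orbit_X_action G \<phi> N m1 m2 c11 c22"
  using assms m1_in m2_in m1_in_O1 m2_notin_O1 orbits_subset_E in_O2_iff
  unfolding two_orbit_X_action_def Let_def by (auto simp: N_block block_matrix_def)

end

lemma two_orbit_conditions_of_nimrep:
  assumes "near_group_nimrep G \<alpha> E \<phi> N" "nimrep_irreducible G E \<phi> N"
  shows "two_orbit_conditions G \<alpha> (stabilizer G \<phi> m1) (stabilizer G \<phi> m2) (N m1 m1) (N m2 m2)"
    and "two_orbit_X_action G \<phi> N m1 m2 (N m1 m1) (N m2 m2)"
proof -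
  note block = block_matrix_of_nimrep[OF assms(1)]
  have "N m1 m2 \<noteq> 0"
    using nimrep_irreducible_block_iff[OF block] assms(2) by blast
  then have conditions:
    "\<alpha> = N m1 m1 * (order G div card (stabilizer G \<phi> m1)) + N m2 m2 * (order G div card (stabilizer G \<phi> m2))"
    "order G dvd card (stabilizer G \<phi> m1) * card (stabilizer G \<phi> m2)"
    "(N m1 m2)\<^sup>2 = card (stabilizer G \<phi> m1) * card (stabilizer G \<phi> m2) div order G + N m1 m1 * N m2 m2"
    using near_group_nimrep_block_iff[OF block] assms(1) by blast+
  then show "two_orbit_conditions G \<alpha> (stabilizer G \<phi> m1) (stabilizer G \<phi> m2) (N m1 m1) (N m2 m2)"
    unfolding two_orbit_conditions_def by blast
  show "two_orbit_X_action G \<phi> N m1 m2 (N m1 m1) (N m2 m2)"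
    using two_orbit_X_actionI[OF block conditions(3)] .
qed

lemma nimrep_of_two_orbit_conditions:
  assumes "two_orbit_conditions G \<alpha> (stabilizer G \<phi> m1) (stabilizer G \<phi> m2) c11 c22"
  obtains N where "near_group_nimrep G \<alpha> E \<phi> N" "nimrep_irreducible G E \<phi> N"
    "N m1 m1 = c11" "N m2 m2 = c22" "two_orbit_X_action G \<phi> N m1 m2 c11 c22"
proof -
  obtain s where s: "s\<^sup>2 = card (stabilizer G \<phi> m1) * card (stabilizer G \<phi> m2) div order G + c11 * c22"
    using assms unfolding two_orbit_conditions_def by blast
  have "order G dvd card (stabilizer G \<phi> m1) * card (stabilizer G \<phi> m2)"
    using assms unfolding two_orbit_conditions_def by blast
  moreover have "0 < card (stabilizer G \<phi> m1) * card (stabilizer G \<phi> m2)"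
    using orbit_stabilizer_theorem[OF m1_in] orbit_stabilizer_theorem[OF m2_in] order_pos
    by (metis nat_0_less_mult_iff)
  ultimately have "0 < card (stabilizer G \<phi> m1) * card (stabilizer G \<phi> m2) div order G"
    using order_pos by (simp add: div_greater_zero_iff dvd_imp_le)
  then have "s \<noteq> 0"
    using s by (cases "s = 0") auto
  define N where "N = block_matrix O1 c11 s c22"
  have block: "N x y = block_matrix O1 c11 s c22 x y" for x y
    unfolding N_def ..
  show thesis
  proof
    show "near_group_nimrep G \<alpha> E \<phi> N"
      using near_group_nimrep_block_iff[OF block \<open>s \<noteq> 0\<close>] assms s
      unfolding two_orbit_conditions_def by blast
    show "nimrep_irreducible G E \<phi> N"
      using nimrep_irreducible_block_iff[OF block] \<open>s \<noteq> 0\<close> by blast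
    show "N m1 m1 = c11" "N m2 m2 = c22"
      using m1_in_O1 m2_notin_O1 by (simp_all add: N_def block_matrix_def)
    show "two_orbit_X_action G \<phi> N m1 m2 c11 c22"
      using two_orbit_X_actionI[OF block s] .
  qed
qed

end

lemma (in group_action) two_orbit_actionI:
  assumes "finite (carrier G)" "card (orbits G E \<phi>) = 2"
    and "m1 \<in> E" "m2 \<in> E" "orbit G \<phi> m1 \<noteq> orbit G \<phi> m2"
  shows "two_orbit_action G E \<phi> m1 m2"
proof -
  have orbits: "orbits G E \<phi> = {orbit G \<phi> m1, orbit G \<phi> m2}"
    using orbits_eq_pair assms(2-5) .
  show ?thesis
  proof (unfold_locales)
    show "E = orbit G \<phi> m1 \<union> orbit G \<phi> m2"
      using orbits_coverture orbits by auto
    show "orbit G \<phi> m1 \<inter> orbit G \<phi> m2 = {}"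
      using disjoint_union orbits assms(5) by blast
  qed (use assms in auto)
qed

(* The existence part asks for a basis of type nat, so the coset G-set is carried into nat
   along an injection. *)
definition transport_action :: "('x \<Rightarrow> 'y) \<Rightarrow> 'x set \<Rightarrow> ('a \<Rightarrow> 'x \<Rightarrow> 'x) \<Rightarrow> 'a \<Rightarrow> 'y \<Rightarrow> 'y"
  where "transport_action h A \<phi> g = (\<lambda>y \<in> h ` A. h (\<phi> g (the_inv_into A h y)))"

context group_action
begin

lemma transport_action_apply: "inj_on h E \<Longrightarrow> x \<in> E \<Longrightarrow> transport_action h E \<phi> g (h x) = h (\<phi> g x)"
  by (simp add: transport_action_def the_inv_into_f_f)

lemma group_action_transport_action:
  assumes "inj_on h E"
  shows "group_action G (h ` E) (transport_action h E \<phi>)"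
proof -
  interpret group G
    using group_hom group_hom.axioms(1) by blast
  note transport_apply = transport_action_apply[OF assms]
  have closed: "\<phi> g x \<in> E" if "g \<in> carrier G" "x \<in> E" for g x
    using element_image that by blast
  show ?thesis
  proof (rule group_actionI)
    show "group G" ..
  next
    show "transport_action h E \<phi> g \<in> extensional (h ` E)" for g
      by (simp add: transport_action_def)
  next
    show "transport_action h E \<phi> g y \<in> h ` E" if "g \<in> carrier G" "y \<in> h ` E" for g y
      using that closed by (auto simp: transport_apply)
  next
    show "transport_action h E \<phi> (g \<otimes> k) y = transport_action h E \<phi> g (transport_action h E \<phi> k y)"
      if "g \<in> carrier G" "k \<in> carrier G" "y \<in> h ` E" for g k y
      using that closed by (auto simp: transport_apply composition_rule)
  next
    show "transport_action h E \<phi> \<one> y = y" if "y \<in> h ` E" for y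
      using that by (auto simp: transport_apply id_eq_one[symmetric])
  qed
qed

lemma orbit_transport_action:
  "inj_on h E \<Longrightarrow> x \<in> E \<Longrightarrow> orbit G (transport_action h E \<phi>) (h x) = h ` orbit G \<phi> x"
  by (auto simp: orbit_def transport_action_apply)

lemma stabilizer_transport_action:
  "inj_on h E \<Longrightarrow> x \<in> E \<Longrightarrow> stabilizer G (transport_action h E \<phi>) (h x) = stabilizer G \<phi> x"
  using element_image by (auto simp: stabilizer_def transport_action_apply inj_on_eq_iff)

end

lemma (in two_orbit_action) two_orbit_action_transport:
  assumes "inj_on h E"
  shows "two_orbit_action G (h ` E) (transport_action h E \<phi>) (h m1) (h m2)"
proof -
  interpret transported: group_action G "h ` E" "transport_action h E \<phi>"
    using group_action_transport_action[OF assms] .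
  have orbits: "orbit G (transport_action h E \<phi>) (h m1) = h ` O1"
    "orbit G (transport_action h E \<phi>) (h m2) = h ` O2"
    using assms m1_in m2_in by (simp_all add: orbit_transport_action)
  have "O1 \<subseteq> E" "O2 \<subseteq> E"
    using orbits_subset_E by blast+
  show ?thesis
  proof (unfold_locales, unfold orbits)
    show "h ` E = h ` O1 \<union> h ` O2"
      using E_eq by (metis image_Un)
    show "h ` O1 \<inter> h ` O2 = {}"
      using inj_on_image_Int[OF assms \<open>O1 \<subseteq> E\<close> \<open>O2 \<subseteq> E\<close>] orbits_disjoint by simp
  qed (use finite_carrier m1_in m2_in in auto)
qed

(* G acting on the disjoint union of its right coset spaces H i \<setminus> G; translating by the
   inverse makes it a left action. *)
definition rcosets_sum_action ::
  "('a, 'b) monoid_scheme \<Rightarrow> 'i set \<Rightarrow> ('i \<Rightarrow> 'a set) \<Rightarrow> 'a \<Rightarrow> 'i \<times> 'a set \<Rightarrow> 'i \<times> 'a set"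
  where "rcosets_sum_action G I H g =
    (\<lambda>p \<in> (SIGMA i:I. rcosets\<^bsub>G\<^esub> (H i)). (fst p, snd p #>\<^bsub>G\<^esub> inv\<^bsub>G\<^esub> g))"

context group
begin

lemma rcosets_mult_closed:
  assumes "H \<subseteq> carrier G" "C \<in> rcosets H" "x \<in> carrier G"
  shows "C #> x \<in> rcosets H"
proof -
  obtain a where "a \<in> carrier G" "C = H #> a"
    using assms(2) by (auto simp: RCOSETS_def)
  then show ?thesis
    using assms by (simp add: coset_mult_assoc rcosetsI)
qed

context
  fixes I and H :: "'i \<Rightarrow> 'a set"
  assumes subgroups: "\<And>i. i \<in> I \<Longrightarrow> subgroup (H i) G"
begin

lemma group_action_rcosets_sum_action:
  "group_action G (SIGMA i:I. rcosets (H i)) (rcosets_sum_action G I H)"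
proof (rule group_actionI)
  have subsets: "H i \<subseteq> carrier G" "C \<subseteq> carrier G" if "i \<in> I" "C \<in> rcosets (H i)" for i C
    using subgroup.subset[OF subgroups] subgroup.rcosets_carrier[OF subgroups is_group] that by auto
  show "group G" ..
  show "rcosets_sum_action G I H g \<in> extensional (SIGMA i:I. rcosets (H i))" for g
    by (simp add: rcosets_sum_action_def)
  show "rcosets_sum_action G I H g p \<in> (SIGMA i:I. rcosets (H i))"
    if "g \<in> carrier G" "p \<in> (SIGMA i:I. rcosets (H i))" for g p
    using that subsets rcosets_mult_closed by (auto simp: rcosets_sum_action_def)
  show "rcosets_sum_action G I H (g \<otimes> k) p = rcosets_sum_action G I H g (rcosets_sum_action G I H k p)"
    if "g \<in> carrier G" "k \<in> carrier G" "p \<in> (SIGMA i:I. rcosets (H i))" for g k p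
    using that subsets rcosets_mult_closed
    by (auto simp: rcosets_sum_action_def inv_mult_group coset_mult_assoc)
  show "rcosets_sum_action G I H \<one> p = p" if "p \<in> (SIGMA i:I. rcosets (H i))" for p
    using that subsets by (auto simp: rcosets_sum_action_def)
qed

lemma base_point_in_rcosets_sum: "i \<in> I \<Longrightarrow> (i, H i) \<in> (SIGMA i:I. rcosets (H i))"
  using subgroups subgroup.subgroup_in_rcosets is_group by blast

lemma orbit_rcosets_sum_action:
  assumes "i \<in> I"
  shows "orbit G (rcosets_sum_action G I H) (i, H i) = {i} \<times> rcosets (H i)"
proof (intro equalityI subsetI)
  have "H i \<subseteq> carrier G"
    using assms subgroups subgroup.subset by blast
  fix p
  show "p \<in> {i} \<times> rcosets (H i)" if "p \<in> orbit G (rcosets_sum_action G I H) (i, H i)"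
    using that base_point_in_rcosets_sum[OF assms] \<open>H i \<subseteq> carrier G\<close>
    by (auto simp: orbit_def rcosets_sum_action_def rcosetsI)
  assume "p \<in> {i} \<times> rcosets (H i)"
  then obtain a where "a \<in> carrier G" "p = (i, H i #> a)"
    by (auto simp: RCOSETS_def)
  then have "p = rcosets_sum_action G I H (inv a) (i, H i)"
    using base_point_in_rcosets_sum[OF assms] by (simp add: rcosets_sum_action_def)
  then show "p \<in> orbit G (rcosets_sum_action G I H) (i, H i)"
    using \<open>a \<in> carrier G\<close> by (auto simp: orbit_def)
qed

lemma stabilizer_rcosets_sum_action:
  assumes "i \<in> I"
  shows "stabilizer G (rcosets_sum_action G I H) (i, H i) = H i"
proof -
  have "H i #> inv g = H i \<longleftrightarrow> g \<in> H i" if "g \<in> carrier G" for g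
    using that subgroups[OF assms] coset_join1 coset_join2 subgroup.m_inv_closed
    by (metis inv_closed inv_inv)
  then show ?thesis
    using base_point_in_rcosets_sum[OF assms] subgroup.subset[OF subgroups[OF assms]]
    by (auto simp: stabilizer_def rcosets_sum_action_def)
qed

end

lemma two_orbit_action_on_nat:
  assumes "finite (carrier G)" "subgroup H1 G" "subgroup H2 G"
  obtains E :: "nat set" and \<phi> m1 m2 where "two_orbit_action G E \<phi> m1 m2"
    "stabilizer G \<phi> m1 = H1" "stabilizer G \<phi> m2 = H2"
proof -
  define H where "H b = (if b then H1 else H2)" for b
  define T where "T = (SIGMA b:UNIV. rcosets (H b))"
  define \<psi> where "\<psi> = rcosets_sum_action G UNIV H"
  have subgroups: "subgroup (H b) G" if "b \<in> UNIV" for b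
    using assms by (simp add: H_def)
  interpret cosets: group_action G T \<psi>
    unfolding T_def \<psi>_def by (rule group_action_rcosets_sum_action[OF subgroups])
  have base_points: "(b, H b) \<in> T" for b
    unfolding T_def by (rule base_point_in_rcosets_sum[OF subgroups UNIV_I])
  have orbits: "orbit G \<psi> (b, H b) = {b} \<times> rcosets (H b)" for b
    unfolding \<psi>_def by (rule orbit_rcosets_sum_action[OF subgroups UNIV_I])
  have stabilizers: "stabilizer G \<psi> (b, H b) = H b" for b
    unfolding \<psi>_def by (rule stabilizer_rcosets_sum_action[OF subgroups UNIV_I])
  have two_orbits: "two_orbit_action G T \<psi> (True, H True) (False, H False)"
  proof (intro two_orbit_action.intro cosets.group_action_axioms two_orbit_action_axioms.intro)
    show "T = orbit G \<psi> (True, H True) \<union> orbit G \<psi> (False, H False)"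
      unfolding orbits T_def UNIV_bool by auto
    show "orbit G \<psi> (True, H True) \<inter> orbit G \<psi> (False, H False) = {}"
      unfolding orbits by blast
  qed (rule assms(1) base_points)+
  have "finite (rcosets (H b))" for b
    using rcosets_subset_PowG[OF subgroups] assms(1) by (meson UNIV_I finite_Pow_iff finite_subset)
  then have "finite T"
    unfolding T_def by (simp add: finite_SigmaI)
  then obtain h :: "bool \<times> 'a set \<Rightarrow> nat" where "inj_on h T"
    using finite_imp_inj_to_nat_seg by blast
  show ?thesis
  proof (rule that)
    show "two_orbit_action G (h ` T) (transport_action h T \<psi>) (h (True, H True)) (h (False, H False))"
      using two_orbit_action.two_orbit_action_transport[OF two_orbits \<open>inj_on h T\<close>] .
    have "H True = H1" "H False = H2"
      by (simp_all add: H_def)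
    then show "stabilizer G (transport_action h T \<psi>) (h (True, H True)) = H1"
      "stabilizer G (transport_action h T \<psi>) (h (False, H False)) = H2"
      using cosets.stabilizer_transport_action[OF \<open>inj_on h T\<close> base_points] stabilizers by metis+
  qed
qed

end

theorem proposition3p15:
  fixes G :: "('a, 'b) monoid_scheme" and \<alpha> :: nat
  assumes "group G" and "finite (carrier G)"
  shows
    "(\<forall>(M :: 'm set) \<phi> N.
        near_group_nimrep G \<alpha> M \<phi> N \<and> nimrep_irreducible G M \<phi> N \<and> card (orbits G M \<phi>) = 2 \<longrightarrow>
        (\<forall>m1\<in>M. \<forall>m2\<in>M. orbit G \<phi> m1 \<noteq> orbit G \<phi> m2 \<longrightarrow>
           subgroup (stabilizer G \<phi> m1) G \<and> subgroup (stabilizer G \<phi> m2) G \<and>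
           two_orbit_conditions G \<alpha> (stabilizer G \<phi> m1) (stabilizer G \<phi> m2) (N m1 m1) (N m2 m2) \<and>
           two_orbit_X_action G \<phi> N m1 m2 (N m1 m1) (N m2 m2)))
     \<and>
     (\<forall>H1 H2 c11 c22. subgroup H1 G \<and> subgroup H2 G \<and> two_orbit_conditions G \<alpha> H1 H2 c11 c22 \<longrightarrow>
        (\<exists>(M :: nat set) \<phi> N m1 m2.
           near_group_nimrep G \<alpha> M \<phi> N \<and> nimrep_irreducible G M \<phi> N \<and> card (orbits G M \<phi>) = 2 \<and>
           m1 \<in> M \<and> m2 \<in> M \<and> orbit G \<phi> m1 \<noteq> orbit G \<phi> m2 \<and>
           stabilizer G \<phi> m1 = H1 \<and> stabilizer G \<phi> m2 = H2 \<and>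
           N m1 m1 = c11 \<and> N m2 m2 = c22 \<and>
           two_orbit_X_action G \<phi> N m1 m2 c11 c22))"
proof (rule conjI; intro allI impI ballI)
  fix M :: "'m set" and \<phi> N m1 m2
  assume nimrep: "near_group_nimrep G \<alpha> M \<phi> N \<and> nimrep_irreducible G M \<phi> N \<and> card (orbits G M \<phi>) = 2"
    and "m1 \<in> M" "m2 \<in> M" "orbit G \<phi> m1 \<noteq> orbit G \<phi> m2"
  have "group_action G M \<phi>"
    using nimrep by (simp add: near_group_nimrep_def)
  then interpret two_orbit_action G M \<phi> m1 m2
    using nimrep \<open>m1 \<in> M\<close> \<open>m2 \<in> M\<close> \<open>orbit G \<phi> m1 \<noteq> orbit G \<phi> m2\<close>
    by (intro group_action.two_orbit_actionI[OF _ assms(2)]) simp_all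
  show "subgroup (stabilizer G \<phi> m1) G \<and> subgroup (stabilizer G \<phi> m2) G \<and>
      two_orbit_conditions G \<alpha> (stabilizer G \<phi> m1) (stabilizer G \<phi> m2) (N m1 m1) (N m2 m2) \<and>
      two_orbit_X_action G \<phi> N m1 m2 (N m1 m1) (N m2 m2)"
    using stabilizer_subgroup m1_in m2_in two_orbit_conditions_of_nimrep nimrep by blast
next
  fix H1 H2 c11 c22
  assume "subgroup H1 G \<and> subgroup H2 G \<and> two_orbit_conditions G \<alpha> H1 H2 c11 c22"
  then obtain E :: "nat set" and \<phi> m1 m2 where two_orbits: "two_orbit_action G E \<phi> m1 m2"
    and stabilizers: "stabilizer G \<phi> m1 = H1" "stabilizer G \<phi> m2 = H2"
    and conditions: "two_orbit_conditions G \<alpha> H1 H2 c11 c22"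
    using group.two_orbit_action_on_nat assms by metis
  interpret two_orbit_action G E \<phi> m1 m2
    by (fact two_orbits)
  obtain N where "near_group_nimrep G \<alpha> E \<phi> N" "nimrep_irreducible G E \<phi> N"
    "N m1 m1 = c11" "N m2 m2 = c22" "two_orbit_X_action G \<phi> N m1 m2 c11 c22"
    using nimrep_of_two_orbit_conditions conditions stabilizers by blast
  moreover have "orbit G \<phi> m1 \<noteq> orbit G \<phi> m2"
    using m2_in_O2 m2_notin_O1 by blast
  ultimately show "\<exists>(M :: nat set) \<phi> N m1 m2.
      near_group_nimrep G \<alpha> M \<phi> N \<and> nimrep_irreducible G M \<phi> N \<and> card (orbits G M \<phi>) = 2 \<and>
      m1 \<in> M \<and> m2 \<in> M \<and> orbit G \<phi> m1 \<noteq> orbit G \<phi> m2 \<and>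
      stabilizer G \<phi> m1 = H1 \<and> stabilizer G \<phi> m2 = H2 \<and>
      N m1 m1 = c11 \<and> N m2 m2 = c22 \<and> two_orbit_X_action G \<phi> N m1 m2 c11 c22"
    using card_orbits m1_in m2_in stabilizers by (intro exI conjI) assumption+
qed

end
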